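(* Let $b^*\in\{0,1\}^{\mathbb N}$, let $n\ge36$, and let $X^{(1)},\dots,X^{(n)}$ be i.i.d. with law $\mathrm{Prod}(q^{(b^* )})$. Let $\hat q_m=\frac1n\sum_{k=1}^nX^{(k)}_m$ and, for $b\in\{0,1\}^{\mathbb N}$, $\phi_n(b)=\liminf_{d\to\infty}\frac1d\sum_{j=1}^{d}\hat q_{v_j(b)}$. Then almost surely $\phi_n(b^* )=\tfrac23$ and $\phi_n(b)\le\tfrac12$ for every $b\in\{0,1\}^{\mathbb N}$ with $b\ne b^*$.
   Context: Index the nodes of an infinite complete binary tree by $\mathbb N$ in level order: the root is $1$, and node $m$ has left child $2m$ and right child $2m+1$. For $b=(b_1,b_2,\dots)\in\{0,1\}^{\mathbb N}$, $v_0(b)=1$ and $v_j(b)=2v_{j-1}(b)+b_j$ for $j\ge1$. $q^{(b)}\in[0,1]^{\mathbb N}$ is given by $q^{(b)}_m=\tfrac23$ if $m=v_j(b)$ for some $j\ge0$ and $q^{(b)}_m=\tfrac13$ otherwise. $\mathrm{Prod}(q)$ is the product measure on $\{0,1\}^{\mathbb N}$ with independent coordinates $X_m\sim\mathrm{Bernoulli}(q_m)$. *)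

theory Defs
  imports "HOL-Probability.Probability"
begin

text \<open>Path in the tree determined by b. The paper's sequence (b_1,b_2,...) is
represented by b :: nat => bool with b j standing for b_(j+1).\<close>
fun vtx :: "(nat \<Rightarrow> bool) \<Rightarrow> nat \<Rightarrow> nat" where
  "vtx b 0 = 1"
| "vtx b (Suc j) = 2 * vtx b j + (if b j then 1 else 0)"

definition qb :: "(nat \<Rightarrow> bool) \<Rightarrow> nat \<Rightarrow> real" where
  "qb b m = (if \<exists>j. m = vtx b j then 2/3 else 1/3)"

text \<open>Product of independent Bernoulli(q_m) coordinates (coordinate 0 is an unused dummy).\<close>
definition Prod :: "(nat \<Rightarrow> real) \<Rightarrow> (nat \<Rightarrow> bool) measure" where
  "Prod q = PiM UNIV (\<lambda>m. measure_pmf (bernoulli_pmf (q m)))"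

definition qhat :: "nat \<Rightarrow> (nat \<Rightarrow> 'a \<Rightarrow> nat \<Rightarrow> bool) \<Rightarrow> 'a \<Rightarrow> nat \<Rightarrow> real" where
  "qhat n X \<omega> m = (1 / real n) * (\<Sum>k=1..n. of_bool (X k \<omega> m))"

definition phi :: "nat \<Rightarrow> (nat \<Rightarrow> 'a \<Rightarrow> nat \<Rightarrow> bool) \<Rightarrow> 'a \<Rightarrow> (nat \<Rightarrow> bool) \<Rightarrow> ereal" where
  "phi n X \<omega> b = liminf (\<lambda>d. ereal ((1 / real d) * (\<Sum>j=1..d. qhat n X \<omega> (vtx b j))))"

end

theory Submission
  imports Defs
begin

text \<open>Every vertex on the path of \<open>b*\<close> has mean 2/3, so Hoeffding's inequality and
  Borel-Cantelli make the running averages of \<open>qhat\<close> along that path converge to 2/3 almost surely.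
  A path \<open>b \<noteq> b*\<close> leaves the path of \<open>b*\<close> at some vertex \<open>r\<close>, below which every vertex has mean 1/3.
  For fixed \<open>r\<close> and depth \<open>d\<close>, each of the \<open>2 ^ d\<close> paths of length \<open>d\<close> from \<open>r\<close> has average
  at least 1/2 with probability at most \<open>exp (-n d / 18) \<le> exp (-2 d)\<close>; as \<open>2 exp (-2) < 1\<close> the union
  bound is summable. Hence almost surely, for all of the countably many \<open>r\<close> at once, eventually every
  path below \<open>r\<close> has average below 1/2, which forces \<open>phi n X \<omega> b \<le> 1/2\<close>.\<close>

fun descend :: "nat \<Rightarrow> (nat \<Rightarrow> bool) \<Rightarrow> nat \<Rightarrow> nat" where
  "descend r c 0 = r"
| "descend r c (Suc t) = 2 * descend r c t + (if c t then 1 else 0)"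

lemma vtx_add: "vtx b (s + t) = descend (vtx b s) (\<lambda>i. b (s + i)) t"
  by (induction t) auto

lemma descend_div_power: "descend r c t div 2 ^ t = r"
proof (induction t)
  case (Suc t)
  have "descend r c (Suc t) div 2 ^ Suc t = (descend r c (Suc t) div 2) div 2 ^ t"
    by (simp add: div_mult2_eq mult.commute)
  with Suc show ?case by simp
qed simp

lemma descend_ge: "r * 2 ^ t \<le> descend r c t"
  by (induction t) auto

lemma descend_cong: "(\<And>i. i < t \<Longrightarrow> c i = c' i) \<Longrightarrow> descend r c t = descend r c' t"
  by (induction t) auto

lemma strict_mono_descend:
  assumes "r \<ge> 1"
  shows "strict_mono (descend r c)"
proof (rule strict_mono_Suc_iff[THEN iffD2], intro allI)
  fix t
  have "1 \<le> r * 2 ^ t" using assms by simp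
  also have "\<dots> \<le> descend r c t" by (rule descend_ge)
  finally show "descend r c t < descend r c (Suc t)" by simp
qed

lemma vtx_bounds: "2 ^ j \<le> vtx b j" "vtx b j < 2 ^ Suc j"
  by (induction j) auto

lemma vtx_pos: "vtx b j \<ge> 1"
  by (induction j) auto

lemma strict_mono_vtx: "strict_mono (vtx b)"
  using strict_mono_descend[of 1 b] vtx_add[of b 0] by (simp add: strict_mono_def)

lemma vtx_eq_imp_level_eq:
  assumes "vtx b j = vtx a i"
  shows "j = i"
proof -
  have "(2::nat) ^ j < 2 ^ Suc i" "(2::nat) ^ i < 2 ^ Suc j"
    using vtx_bounds[where b=b and j=j] vtx_bounds[where b=a and j=i] assms by linarith+
  then show ?thesis by (simp only: power_strict_increasing_iff)
qed

lemma vtx_Suc_notin_range_vtx: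
  assumes "b j \<noteq> a j"
  shows "vtx b (Suc j) \<notin> range (vtx a)"
proof
  assume "vtx b (Suc j) \<in> range (vtx a)"
  then obtain i where i: "vtx b (Suc j) = vtx a i" by auto
  then have "vtx b (Suc j) = vtx a (Suc j)" using vtx_eq_imp_level_eq by metis
  then have "vtx b (Suc j) mod 2 = vtx a (Suc j) mod 2" by simp
  with assms show False by (auto split: if_splits)
qed

text \<open>The \<open>t\<close>-th ancestor (\<open>div 2 ^ t\<close>) of \<open>descend r c t\<close> is \<open>r\<close>, while that of a path vertex
  of depth at least \<open>t\<close> is again a path vertex.\<close>
lemma descend_notin_range_vtx:
  assumes r: "r \<ge> 1" "r \<notin> range (vtx a)"
  shows "descend r c t \<notin> range (vtx a)"
proof
  assume "descend r c t \<in> range (vtx a)"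
  then obtain i where i: "descend r c t = vtx a i" by auto
  show False
  proof (cases "t \<le> i")
    case True
    then have "vtx a i = descend (vtx a (i - t)) (\<lambda>j. a (i - t + j)) t"
      using vtx_add[of a "i - t" t] by simp
    then have "r = vtx a (i - t)"
      using i descend_div_power by metis
    with r show False by auto
  next
    case False
    have "vtx a i < 2 ^ Suc i" by (rule vtx_bounds)
    also have "(2::nat) ^ Suc i \<le> 2 ^ t" using False by (intro power_increasing) auto
    also have "\<dots> \<le> r * 2 ^ t" using r by simp
    also have "\<dots> \<le> descend r c t" by (rule descend_ge)
    finally show False using i by simp
  qed
qed

lemma (in prob_space) AE_eventually_notin_of_geometric_bound:
  assumes "\<And>d. A d \<in> events" and "\<And>d. prob (A d) \<le> C * r ^ d" and "0 \<le> r" "r < 1"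
  shows "AE \<omega> in M. eventually (\<lambda>d. \<omega> \<notin> A d) sequentially"
proof -
  have "summable (\<lambda>d. C * r ^ d)" using assms(3,4) by (intro summable_mult summable_geometric) auto
  then have "summable (\<lambda>d. prob (A d))"
    by (rule summable_comparison_test[rotated]) (use assms(2) in auto)
  then have "AE \<omega> in M. eventually (\<lambda>d. \<omega> \<in> space M - A d) sequentially"
    using assms(1) by (intro borel_cantelli_AE1) (auto simp: emeasure_eq_measure)
  then show ?thesis by (auto elim!: eventually_mono)
qed

lemma LIMSEQ_of_eventually_dist_less_inverse_Suc:
  fixes a :: "nat \<Rightarrow> real"
  assumes "\<And>i. eventually (\<lambda>d. \<bar>a d - L\<bar> < 1 / Suc i) sequentially"
  shows "a \<longlonglongrightarrow> L"
proof (rule tendstoI)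
  fix e :: real assume "0 < e"
  then obtain i where "inverse (real (Suc i)) < e" using reals_Archimedean by blast
  with assms[of i] show "eventually (\<lambda>d. dist (a d) L < e) sequentially"
    by (auto simp: dist_real_def inverse_eq_divide elim: eventually_mono)
qed

lemma liminf_average_le:
  fixes g :: "nat \<Rightarrow> real" and L :: real
  assumes g: "\<And>j. 0 \<le> g j" "\<And>j. g j \<le> 1" and "0 \<le> L"
    and tail: "eventually (\<lambda>d. (\<Sum>t<d. g (s + t)) \<le> d * L) sequentially"
  shows "liminf (\<lambda>N. ereal (1 / real N * (\<Sum>j=1..N. g j))) \<le> ereal L"
proof -
  obtain D where D: "\<And>d. d \<ge> D \<Longrightarrow> (\<Sum>t<d. g (s + t)) \<le> d * L"
    using tail by (auto simp: eventually_sequentially)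
  have bound: "1 / real N * (\<Sum>j=1..N. g j) \<le> L + (real s + L) * (1 / real N)"
    if N: "N > s + D" for N
  proof -
    define d where "d = Suc N - s"
    have "(\<Sum>j=1..N. g j) \<le> (\<Sum>j<s + d. g j)"
      using N g(1) by (intro sum_mono2) (auto simp: d_def)
    also have "\<dots> = (\<Sum>j<s. g j) + (\<Sum>t<d. g (s + t))"
      by (induction d) auto
    also have "(\<Sum>j<s. g j) \<le> real s"
      using sum_bounded_above[of "{..<s}" g 1] g(2) by simp
    also have "(\<Sum>t<d. g (s + t)) \<le> d * L"
      using N by (intro D) (simp add: d_def)
    also have "real d * L \<le> (real N + 1) * L"
      using \<open>0 \<le> L\<close> by (intro mult_right_mono) (auto simp: d_def)
    finally have "(\<Sum>j=1..N. g j) \<le> real s + (real N + 1) * L" by simp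
    then have "1 / real N * (\<Sum>j=1..N. g j) \<le> 1 / real N * (real s + (real N + 1) * L)"
      by (intro mult_left_mono) auto
    also have "\<dots> = L + (real s + L) * (1 / real N)"
      using N by (simp add: field_simps)
    finally show ?thesis .
  qed
  have "liminf (\<lambda>N. ereal (1 / real N * (\<Sum>j=1..N. g j)))
      \<le> liminf (\<lambda>N. ereal (L + (real s + L) * (1 / real N)))"
    by (intro Liminf_mono eventually_mono[OF eventually_gt_at_top[of "s + D"]]) (use bound in simp)
  also have "\<dots> = ereal L"
  proof (rule lim_imp_Liminf)
    have "(\<lambda>N. L + (real s + L) * (1 / real N)) \<longlonglongrightarrow> L + (real s + L) * 0"
      by (intro tendsto_intros lim_inverse_n')
    then show "(\<lambda>N. ereal (L + (real s + L) * (1 / real N))) \<longlonglongrightarrow> ereal L"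
      by (simp add: tendsto_ereal)
  qed simp
  finally show ?thesis .
qed

locale iid_Prod_sample = prob_space M for M :: "'a measure" +
  fixes X :: "nat \<Rightarrow> 'a \<Rightarrow> nat \<Rightarrow> bool" and q :: "nat \<Rightarrow> real" and n :: nat
  assumes indep_X: "indep_vars (\<lambda>_. Prod q) X {1..n}"
    and distr_X: "\<And>k. k \<in> {1..n} \<Longrightarrow> distr M (Prod q) (X k) = Prod q"
    and n_pos: "n \<ge> 1"
    and q_prob: "\<And>m. 0 \<le> q m \<and> q m \<le> 1"
begin

abbreviation coin :: "nat \<Rightarrow> bool measure" where
  "coin m \<equiv> measure_pmf (bernoulli_pmf (q m))"

lemma Prod_eq: "Prod q = (\<Pi>\<^sub>M m\<in>UNIV. coin m)"
  by (simp add: Prod_def)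

lemma measurable_X: "k \<in> {1..n} \<Longrightarrow> X k \<in> measurable M (Prod q)"
  using indep_X by (auto simp: indep_vars_def)

lemma measurable_coordinate: "k \<in> {1..n} \<Longrightarrow> (\<lambda>\<omega>. X k \<omega> m) \<in> measurable M (coin m)"
  using measurable_compose[OF measurable_X[unfolded Prod_eq] measurable_component_singleton[of m UNIV]]
  by simp

lemma distr_coordinate:
  assumes k: "k \<in> {1..n}"
  shows "distr M (coin m) (\<lambda>\<omega>. X k \<omega> m) = coin m"
proof -
  have "distr M (coin m) (\<lambda>\<omega>. X k \<omega> m) = distr (distr M (Prod q) (X k)) (coin m) (\<lambda>f. f m)"
    using measurable_X[OF k] by (subst distr_distr) (auto simp: Prod_eq comp_def)
  also have "\<dots> = distr (Prod q) (coin m) (\<lambda>f. f m)"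
    by (simp only: distr_X[OF k])
  also have "\<dots> = coin m"
    unfolding Prod_eq by (rule distr_PiM_component) (auto intro: prob_space_measure_pmf)
  finally show ?thesis .
qed

lemma emeasure_coordinates_in_box:
  assumes V: "finite V" and A: "\<And>k m. k \<in> {1..n} \<Longrightarrow> m \<in> V \<Longrightarrow> A (k, m) \<in> sets (coin m)"
  shows "emeasure M {\<omega> \<in> space M. \<forall>(k, m) \<in> {1..n} \<times> V. X k \<omega> m \<in> A (k, m)}
    = (\<Prod>(k, m) \<in> {1..n} \<times> V. emeasure (coin m) (A (k, m)))"
proof -
  define E where "E k = prod_emb UNIV coin V (\<Pi>\<^sub>E m\<in>V. A (k, m))" for k
  have E: "E k \<in> sets (Prod q)" if "k \<in> {1..n}" for k
    unfolding E_def Prod_eq using A that V by (intro sets_PiM_I) auto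
  have "{\<omega> \<in> space M. \<forall>(k, m) \<in> {1..n} \<times> V. X k \<omega> m \<in> A (k, m)} = (\<Inter>k\<in>{1..n}. X k -` E k \<inter> space M)"
    using n_pos by (auto simp: E_def prod_emb_def PiE_iff space_PiM)
  also have "emeasure M \<dots> = (\<Prod>k\<in>{1..n}. emeasure M (X k -` E k \<inter> space M))"
    using indep_varsD[OF indep_X, of "{1..n}" E] E n_pos
    by (simp add: emeasure_eq_measure prod_ennreal)
  also have "\<dots> = (\<Prod>k\<in>{1..n}. emeasure (Prod q) (E k))"
    using E measurable_X distr_X by (intro prod.cong refl) (metis emeasure_distr)
  also have "\<dots> = (\<Prod>k\<in>{1..n}. \<Prod>m\<in>V. emeasure (coin m) (A (k, m)))"
    unfolding E_def Prod_eq using A V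
    by (intro prod.cong refl product_prob_space.emeasure_PiM_emb) (auto intro: product_prob_spaceI prob_space_measure_pmf)
  also have "\<dots> = (\<Prod>(k, m) \<in> {1..n} \<times> V. emeasure (coin m) (A (k, m)))"
    by (simp add: prod.cartesian_product)
  finally show ?thesis .
qed

lemma indep_vars_coordinates:
  assumes V: "finite V" "V \<noteq> {}"
  shows "indep_vars (\<lambda>(k, m). coin m) (\<lambda>(k, m) \<omega>. X k \<omega> m) ({1..n} \<times> V)"
proof -
  let ?I = "{1..n} \<times> V"
  let ?Z = "\<lambda>(k, m) \<omega>. X k \<omega> m"
  let ?C = "\<lambda>(k, m). coin m"
  have I: "?I \<noteq> {}" "finite ?I" using V n_pos by auto
  have rv: "random_variable (?C i) (?Z i)" if "i \<in> ?I" for i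
    using that measurable_coordinate by auto
  interpret C: product_prob_space ?C
    by (intro product_prob_spaceI) (auto intro: prob_space_measure_pmf)
  have distr_C: "(\<Pi>\<^sub>M i\<in>?I. distr M (?C i) (?Z i)) = (\<Pi>\<^sub>M i\<in>?I. ?C i)"
    by (intro PiM_cong) (auto simp: distr_coordinate)
  have "distr M (\<Pi>\<^sub>M i\<in>?I. ?C i) (\<lambda>\<omega>. \<lambda>i\<in>?I. ?Z i \<omega>) = (\<Pi>\<^sub>M i\<in>?I. ?C i)"
  proof (rule C.PiM_eqI[OF I(2)])
    fix A assume A: "\<And>i. i \<in> ?I \<Longrightarrow> A i \<in> sets (?C i)"
    have "(\<lambda>\<omega>. \<lambda>i\<in>?I. ?Z i \<omega>) \<in> measurable M (\<Pi>\<^sub>M i\<in>?I. ?C i)"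
      using rv by (intro measurable_restrict) auto
    moreover have "Pi\<^sub>E ?I A \<in> sets (\<Pi>\<^sub>M i\<in>?I. ?C i)"
      using A I(2) by (intro sets_PiM_I_finite) auto
    moreover have "(\<lambda>\<omega>. \<lambda>i\<in>?I. ?Z i \<omega>) -` Pi\<^sub>E ?I A \<inter> space M
        = {\<omega> \<in> space M. \<forall>(k, m) \<in> ?I. X k \<omega> m \<in> A (k, m)}"
      by (auto simp: PiE_iff)
    ultimately have "emeasure (distr M (\<Pi>\<^sub>M i\<in>?I. ?C i) (\<lambda>\<omega>. \<lambda>i\<in>?I. ?Z i \<omega>)) (Pi\<^sub>E ?I A)
        = emeasure M {\<omega> \<in> space M. \<forall>(k, m) \<in> ?I. X k \<omega> m \<in> A (k, m)}"
      by (simp add: emeasure_distr)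
    also have "\<dots> = (\<Prod>i\<in>?I. emeasure (?C i) (A i))"
      using A by (subst emeasure_coordinates_in_box[OF V(1)]) (auto simp: case_prod_beta)
    finally show "emeasure (distr M (\<Pi>\<^sub>M i\<in>?I. ?C i) (\<lambda>\<omega>. \<lambda>i\<in>?I. ?Z i \<omega>)) (Pi\<^sub>E ?I A)
        = (\<Prod>i\<in>?I. emeasure (?C i) (A i))" .
  qed simp
  then show ?thesis
    by (subst indep_vars_iff_distr_eq_PiM'[OF I(1) rv]) (simp_all only: distr_C)
qed

definition sample_indicator :: "nat \<times> nat \<Rightarrow> 'a \<Rightarrow> real" where
  "sample_indicator i \<omega> = of_bool (X (fst i) \<omega> (snd i))"

lemma indep_vars_sample_indicator:
  assumes "finite V" "V \<noteq> {}"
  shows "indep_vars (\<lambda>_. borel) sample_indicator ({1..n} \<times> V)"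
proof -
  have "indep_vars (\<lambda>_. borel) (\<lambda>i \<omega>. of_bool ((\<lambda>(k, m) \<omega>. X k \<omega> m) i \<omega>) :: real) ({1..n} \<times> V)"
    by (rule indep_vars_compose2[OF indep_vars_coordinates[OF assms]]) auto
  then show ?thesis
    by (simp add: sample_indicator_def[abs_def] case_prod_beta')
qed

lemma expectation_sample_indicator:
  assumes k: "k \<in> {1..n}"
  shows "expectation (sample_indicator (k, m)) = q m"
proof -
  have "integral\<^sup>L (distr M (coin m) (\<lambda>\<omega>. X k \<omega> m)) (of_bool :: bool \<Rightarrow> real)
      = expectation (sample_indicator (k, m))"
    using measurable_coordinate[OF k] by (simp add: integral_distr sample_indicator_def[abs_def])
  then show ?thesis
    unfolding distr_coordinate[OF k] using q_prob[of m] by simp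
qed

lemma sum_qhat_eq: "(\<Sum>m\<in>V. qhat n X \<omega> m) = (\<Sum>i\<in>{1..n} \<times> V. sample_indicator i \<omega>) / n"
proof -
  have "(\<Sum>i\<in>{1..n} \<times> V. sample_indicator i \<omega>) = (\<Sum>k=1..n. \<Sum>m\<in>V. of_bool (X k \<omega> m))"
    by (simp only: sample_indicator_def sum.cartesian_product case_prod_unfold)
  also have "\<dots> = (\<Sum>m\<in>V. \<Sum>k=1..n. of_bool (X k \<omega> m))"
    by (rule sum.swap)
  finally show ?thesis
    by (simp add: qhat_def sum_divide_distrib[of _ V])
qed

lemma qhat_measurable [measurable]: "(\<lambda>\<omega>. qhat n X \<omega> m) \<in> borel_measurable M"
  unfolding qhat_def
  by (intro borel_measurable_times borel_measurable_const borel_measurable_sum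
      measurable_compose[OF measurable_coordinate]) auto

lemma qhat_bounds: "0 \<le> qhat n X \<omega> m" "qhat n X \<omega> m \<le> 1"
proof -
  have "(\<Sum>k=1..n. of_bool (X k \<omega> m)) \<le> real (card {1..n}) * 1"
    by (intro sum_bounded_above) auto
  then show "0 \<le> qhat n X \<omega> m" "qhat n X \<omega> m \<le> 1"
    using n_pos by (auto simp: qhat_def intro!: sum_nonneg)
qed

lemma
  fixes \<epsilon> :: real
  assumes V: "finite V" and \<epsilon>: "\<epsilon> \<ge> 0"
  shows prob_sum_qhat_ge:
      "prob {\<omega> \<in> space M. (\<Sum>m\<in>V. qhat n X \<omega> m) \<ge> (\<Sum>m\<in>V. q m) + \<epsilon>} \<le> exp (-2 * n * \<epsilon>\<^sup>2 / card V)"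
      (is ?ge)
    and prob_sum_qhat_abs_ge:
      "prob {\<omega> \<in> space M. \<bar>(\<Sum>m\<in>V. qhat n X \<omega> m) - (\<Sum>m\<in>V. q m)\<bar> \<ge> \<epsilon>} \<le> 2 * exp (-2 * n * \<epsilon>\<^sup>2 / card V)"
      (is ?abs_ge)
proof -
  consider "V = {}" | "V \<noteq> {}" by blast
  then have "?ge \<and> ?abs_ge"
  proof cases
    case 1
    then show ?thesis by (simp add: order_trans[OF prob_le_1])
  next
    case 2
    let ?I = "{1..n} \<times> V"
    interpret H: Hoeffding_ineq M ?I sample_indicator "\<lambda>_. 0" "\<lambda>_. 1" "\<Sum>i\<in>?I. expectation (sample_indicator i)"
      by unfold_locales (use V 2 indep_vars_sample_indicator in \<open>auto simp: sample_indicator_def\<close>)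
    have "(\<Sum>i\<in>?I. expectation (sample_indicator i)) = (\<Sum>(k, m)\<in>?I. q m)"
      by (intro sum.cong) (auto simp: expectation_sample_indicator)
    then have \<mu>: "(\<Sum>i\<in>?I. expectation (sample_indicator i)) = n * (\<Sum>m\<in>V. q m)"
      by (simp flip: sum.cartesian_product)
    have var: "(\<Sum>i\<in>?I. (1 - (0::real))\<^sup>2) = n * card V"
      by (simp add: card_cartesian_product)
    have var_pos: "(\<Sum>i\<in>?I. (1 - (0::real))\<^sup>2) > 0"
      unfolding var using V 2 n_pos by (simp add: card_gt_0_iff)
    have exponent: "-2 * (n * \<epsilon>)\<^sup>2 / (n * card V) = -2 * n * \<epsilon>\<^sup>2 / card V"
      using n_pos by (simp add: power2_eq_square)
    have n: "real n > 0" using n_pos by simp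
    have "{\<omega> \<in> space M. (\<Sum>m\<in>V. qhat n X \<omega> m) \<ge> (\<Sum>m\<in>V. q m) + \<epsilon>}
        = {\<omega> \<in> space M. (\<Sum>i\<in>?I. sample_indicator i \<omega>) \<ge> n * (\<Sum>m\<in>V. q m) + n * \<epsilon>}"
      using n by (auto simp: sum_qhat_eq field_simps)
    moreover have "{\<omega> \<in> space M. \<bar>(\<Sum>m\<in>V. qhat n X \<omega> m) - (\<Sum>m\<in>V. q m)\<bar> \<ge> \<epsilon>}
        = {\<omega> \<in> space M. \<bar>(\<Sum>i\<in>?I. sample_indicator i \<omega>) - n * (\<Sum>m\<in>V. q m)\<bar> \<ge> n * \<epsilon>}"
      using n by (auto simp: sum_qhat_eq field_simps)
    ultimately show ?thesis
      using H.Hoeffding_ineq_ge[OF _ var_pos, of "n * \<epsilon>"] H.Hoeffding_ineq_abs_ge[OF _ var_pos, of "n * \<epsilon>"] \<epsilon>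
      unfolding \<mu> var exponent by simp
  qed
  then show ?ge and ?abs_ge
    by blast+
qed

lemma AE_average_qhat_tendsto:
  assumes u: "inj u" and q_u: "\<And>j. q (u j) = p"
  shows "AE \<omega> in M. (\<lambda>d. 1 / real d * (\<Sum>j=1..d. qhat n X \<omega> (u j))) \<longlonglongrightarrow> p"
proof -
  have sum_u: "(\<Sum>m\<in>u ` {1..d}. f m) = (\<Sum>j=1..d. f (u j))" for f :: "nat \<Rightarrow> real" and d
    using u by (simp add: sum.reindex inj_on_subset)
  have card_u: "card (u ` {1..d}) = d" for d
    using u by (simp add: card_image inj_on_subset)
  define A where "A i d = {\<omega> \<in> space M. \<bar>(\<Sum>j=1..d. qhat n X \<omega> (u j)) - d * p\<bar> \<ge> d / Suc i}" for i d
  have "AE \<omega> in M. eventually (\<lambda>d. \<omega> \<notin> A i d) sequentially" for i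
  proof (rule AE_eventually_notin_of_geometric_bound)
    show "A i d \<in> events" for d
      unfolding A_def by measurable
    show "0 \<le> exp (-2 / (real (Suc i))\<^sup>2)" "exp (-2 / (real (Suc i))\<^sup>2) < 1"
      by auto
    show "prob (A i d) \<le> 2 * exp (-2 / (real (Suc i))\<^sup>2) ^ d" for d
    proof -
      define k where "k = real (Suc i)"
      have "prob (A i d) \<le> 2 * exp (-2 * n * (d / k)\<^sup>2 / d)"
        using prob_sum_qhat_abs_ge[of "u ` {1..d}" "d / k"] unfolding sum_u card_u
        by (simp add: A_def q_u k_def)
      also have "-2 * n * (d / k)\<^sup>2 / d = d * (-2 * n / k\<^sup>2)"
        by (simp add: power_divide power2_eq_square)
      also have "\<dots> \<le> d * (-2 / k\<^sup>2)"
        using n_pos by (intro mult_left_mono divide_right_mono) auto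
      finally show ?thesis
        unfolding k_def by (simp flip: exp_of_nat_mult)
    qed
  qed
  then have "AE \<omega> in M. \<forall>i. eventually (\<lambda>d. \<omega> \<notin> A i d) sequentially"
    by (simp add: AE_all_countable)
  then show ?thesis
    using AE_space
  proof eventually_elim
    case (elim \<omega>)
    show ?case
    proof (rule LIMSEQ_of_eventually_dist_less_inverse_Suc)
      fix i
      show "eventually (\<lambda>d. \<bar>1 / real d * (\<Sum>j=1..d. qhat n X \<omega> (u j)) - p\<bar> < 1 / Suc i) sequentially"
        using elim(1)[rule_format, of i] eventually_gt_at_top[of 0]
      proof eventually_elim
        case (elim d)
        then have "\<bar>(\<Sum>j=1..d. qhat n X \<omega> (u j)) - d * p\<bar> < d / Suc i"
          using \<open>\<omega> \<in> space M\<close> by (simp add: A_def)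
        moreover have "1 / real d * (\<Sum>j=1..d. qhat n X \<omega> (u j)) - p = ((\<Sum>j=1..d. qhat n X \<omega> (u j)) - d * p) / d"
          using elim(2) by (simp add: field_simps)
        ultimately show ?case
          using elim(2) by (simp add: abs_divide pos_divide_less_eq)
      qed
    qed
  qed
qed

lemma AE_eventually_descend_sums_less:
  fixes p \<epsilon> :: real
  assumes r: "r \<ge> 1" and q_le: "\<And>c t. q (descend r c t) \<le> p"
    and "0 \<le> \<epsilon>" and ratio: "2 * exp (-2 * n * \<epsilon>\<^sup>2) < 1"
  shows "AE \<omega> in M. eventually (\<lambda>d. \<forall>c. (\<Sum>t<d. qhat n X \<omega> (descend r c t)) < d * (p + \<epsilon>)) sequentially"
proof -
  define S where "S d cs = {\<omega> \<in> space M. (\<Sum>t<d. qhat n X \<omega> (descend r ((!) cs) t)) \<ge> d * (p + \<epsilon>)}" for d cs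
  define Bad where "Bad d = (\<Union>cs \<in> {cs. length cs = d}. S d cs)" for d
  have finite_paths: "finite {cs :: bool list. length cs = d}" for d
    using finite_lists_length_eq[of "UNIV :: bool set"] by simp
  have prob_S: "prob (S d cs) \<le> exp (-2 * n * \<epsilon>\<^sup>2) ^ d" for d cs
  proof -
    let ?V = "descend r ((!) cs) ` {..<d}"
    have inj: "inj_on (descend r ((!) cs)) {..<d}"
      using strict_mono_descend[OF r] strict_mono_imp_inj_on inj_on_subset by blast
    then have card: "card ?V = d" by (simp add: card_image)
    have "(\<Sum>m\<in>?V. q m) \<le> d * p"
      using sum_bounded_above[of ?V q p] q_le card by auto
    moreover have "(\<Sum>m\<in>?V. qhat n X \<omega> m) = (\<Sum>t<d. qhat n X \<omega> (descend r ((!) cs) t))" for \<omega>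
      using inj by (simp add: sum.reindex)
    ultimately have "S d cs \<subseteq> {\<omega> \<in> space M. (\<Sum>m\<in>?V. qhat n X \<omega> m) \<ge> (\<Sum>m\<in>?V. q m) + d * \<epsilon>}"
      by (auto simp: S_def ring_distribs)
    then have "prob (S d cs) \<le> prob {\<omega> \<in> space M. (\<Sum>m\<in>?V. qhat n X \<omega> m) \<ge> (\<Sum>m\<in>?V. q m) + d * \<epsilon>}"
      by (intro finite_measure_mono) measurable
    also have "\<dots> \<le> exp (-2 * n * (d * \<epsilon>)\<^sup>2 / d)"
      using prob_sum_qhat_ge[of ?V "d * \<epsilon>"] \<open>0 \<le> \<epsilon>\<close> card by simp
    also have "-2 * n * (d * \<epsilon>)\<^sup>2 / d = d * (-2 * n * \<epsilon>\<^sup>2)"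
      by (simp add: power2_eq_square)
    finally show ?thesis
      by (simp flip: exp_of_nat_mult)
  qed
  have "AE \<omega> in M. eventually (\<lambda>d. \<omega> \<notin> Bad d) sequentially"
  proof (rule AE_eventually_notin_of_geometric_bound)
    show "Bad d \<in> events" for d
      unfolding Bad_def S_def using finite_paths by (intro sets.finite_UN) auto
    show "prob (Bad d) \<le> 1 * (2 * exp (-2 * n * \<epsilon>\<^sup>2)) ^ d" for d
    proof -
      have "prob (Bad d) \<le> (\<Sum>cs \<in> {cs. length cs = d}. prob (S d cs))"
        unfolding Bad_def S_def using finite_paths by (intro finite_measure_subadditive_finite) auto
      also have "\<dots> \<le> (\<Sum>cs \<in> {cs :: bool list. length cs = d}. exp (-2 * n * \<epsilon>\<^sup>2) ^ d)"
        by (intro sum_mono prob_S)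
      also have "\<dots> = (2 * exp (-2 * n * \<epsilon>\<^sup>2)) ^ d"
        using card_lists_length_eq[of "UNIV :: bool set" d] by (simp add: power_mult_distrib)
      finally show ?thesis by simp
    qed
  qed (use ratio in auto)
  then show ?thesis
    using AE_space
  proof eventually_elim
    case (elim \<omega>)
    show ?case
      using elim(1)
    proof eventually_elim
      case (elim d)
      show ?case
      proof
        fix c
        have "\<omega> \<notin> S d (map c [0..<d])"
          using elim unfolding Bad_def by auto
        moreover have "descend r ((!) (map c [0..<d])) t = descend r c t" if "t < d" for t
          using that by (intro descend_cong) simp
        ultimately show "(\<Sum>t<d. qhat n X \<omega> (descend r c t)) < d * (p + \<epsilon>)"
          using \<open>\<omega> \<in> space M\<close> by (simp add: S_def)
      qed
    qed
  qed
qed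

lemma AE_phi_eq_of_path:
  assumes "\<And>j. q (vtx b j) = p"
  shows "AE \<omega> in M. phi n X \<omega> b = ereal p"
  using AE_average_qhat_tendsto[OF strict_mono_imp_inj_on[OF strict_mono_vtx] assms]
proof eventually_elim
  case (elim \<omega>)
  then show ?case
    unfolding phi_def by (intro lim_imp_Liminf) (simp_all add: tendsto_ereal)
qed

lemma AE_phi_le_off_path:
  fixes p \<epsilon> :: real
  assumes q_le: "\<And>m. m \<notin> range (vtx a) \<Longrightarrow> q m \<le> p"
    and "0 \<le> p" "0 \<le> \<epsilon>" "2 * exp (-2 * n * \<epsilon>\<^sup>2) < 1"
  shows "AE \<omega> in M. \<forall>b. b \<noteq> a \<longrightarrow> phi n X \<omega> b \<le> ereal (p + \<epsilon>)"
proof -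
  have "AE \<omega> in M. \<forall>r. r \<ge> 1 \<and> r \<notin> range (vtx a) \<longrightarrow>
      eventually (\<lambda>d. \<forall>c. (\<Sum>t<d. qhat n X \<omega> (descend r c t)) < d * (p + \<epsilon>)) sequentially"
    unfolding AE_all_countable
    using q_le descend_notin_range_vtx assms(3,4)
    by (intro allI AE_impI AE_eventually_descend_sums_less) auto
  then show ?thesis
  proof eventually_elim
    case (elim \<omega>)
    show ?case
    proof (intro allI impI)
      fix b assume "b \<noteq> a"
      then obtain j where "b j \<noteq> a j" by auto
      then have "vtx b (Suc j) \<ge> 1 \<and> vtx b (Suc j) \<notin> range (vtx a)"
        using vtx_pos vtx_Suc_notin_range_vtx by simp
      with elim have "eventually (\<lambda>d. \<forall>c. (\<Sum>t<d. qhat n X \<omega> (descend (vtx b (Suc j)) c t)) < d * (p + \<epsilon>))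
          sequentially"
        by blast
      then have "eventually (\<lambda>d. (\<Sum>t<d. qhat n X \<omega> (vtx b (Suc j + t))) \<le> d * (p + \<epsilon>)) sequentially"
      proof (rule eventually_mono)
        fix d assume "\<forall>c. (\<Sum>t<d. qhat n X \<omega> (descend (vtx b (Suc j)) c t)) < d * (p + \<epsilon>)"
        then have "(\<Sum>t<d. qhat n X \<omega> (descend (vtx b (Suc j)) (\<lambda>i. b (Suc j + i)) t)) < d * (p + \<epsilon>)"
          by (rule spec)
        then show "(\<Sum>t<d. qhat n X \<omega> (vtx b (Suc j + t))) \<le> d * (p + \<epsilon>)"
          by (simp only: vtx_add less_imp_le)
      qed
      then show "phi n X \<omega> b \<le> ereal (p + \<epsilon>)"
        unfolding phi_def using assms(2,3)
        by (intro liminf_average_le[where s = "Suc j"]) (simp_all add: qhat_bounds)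
    qed
  qed
qed

end

theorem mainTheorem8:
  fixes M :: "'a measure" and X :: "nat \<Rightarrow> 'a \<Rightarrow> nat \<Rightarrow> bool"
    and bstar :: "nat \<Rightarrow> bool" and n :: nat
  assumes "prob_space M"
    and "n \<ge> 36"
    and "\<And>k. k \<in> {1..n} \<Longrightarrow> X k \<in> measurable M (Prod (qb bstar))"
    and "prob_space.indep_vars M (\<lambda>_. Prod (qb bstar)) X {1..n}"
    and "\<And>k. k \<in> {1..n} \<Longrightarrow> distr M (Prod (qb bstar)) (X k) = Prod (qb bstar)"
  shows "AE \<omega> in M. phi n X \<omega> bstar = ereal (2/3) \<and>
           (\<forall>b. b \<noteq> bstar \<longrightarrow> phi n X \<omega> b \<le> ereal (1/2))"
proof -
  interpret iid_Prod_sample M X "qb bstar" n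
    using assms(1,2,4,5) by (intro iid_Prod_sample.intro iid_Prod_sample_axioms.intro) (simp_all add: qb_def)
  have "2 * exp (-2 * n * (1/6)\<^sup>2) \<le> 2 * exp (-2 :: real)"
    using assms(2) by (simp add: power2_eq_square)
  also have "\<dots> = 2 / exp 2"
    by (simp add: exp_minus inverse_eq_divide)
  also have "\<dots> < 1"
    using exp_ge_add_one_self[of 2] by simp
  finally have ratio: "2 * exp (-2 * n * (1/6)\<^sup>2) < 1" .
  have "AE \<omega> in M. phi n X \<omega> bstar = ereal (2/3)"
    by (rule AE_phi_eq_of_path) (auto simp: qb_def)
  moreover have "AE \<omega> in M. \<forall>b. b \<noteq> bstar \<longrightarrow> phi n X \<omega> b \<le> ereal (1/3 + 1/6)"
    by (rule AE_phi_le_off_path[OF _ _ _ ratio]) (auto simp: qb_def)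
  ultimately show ?thesis
    by eventually_elim simp
qed

end
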